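(* Let $a,b\geq0$ with $(a,b)\neq(0,0)$, let $u_0:\mathbb{T}^d\to[0,\infty)$ be bounded, and let $u(x,t)=\int_{\mathbb{T}^d}\Psi_{a,b}(x-y,t)u_0(y)\,dy$. Then for every $r>0$ and $\varepsilon>0$ there is $t_{r,\varepsilon}<\infty$ such that $|u(x,t)-u(y,t)|<\varepsilon$ for all $x,y\in B_r$ and all $t>t_{r,\varepsilon}$.
   Context: $\mathbb{T}^d=\mathbb{R}^d/\mathbb{Z}^d$, functions identified with their periodic extensions to $\mathbb{R}^d$; $B_r$ is the open ball in $\mathbb{R}^d$ of radius $r$ centered at $0$. For $a>0$, $b\geq0$: $\widehat{\Psi}_{a,b}(n,t)=\exp\!\Big(-t\,\frac{-b+\sqrt{b^2+16a\pi^2|n|^2}}{2a}\Big)$; for $a=0,b>0$: $\widehat{\Psi}_{0,b}(n,t)=\exp(-\tfrac tb(2\pi|n|)^2)$; and $\Psi_{a,b}(x,t)=\sum_{n\in\mathbb{Z}^d}\widehat{\Psi}_{a,b}(n,t)e^{2\pi ix\cdot n}$. *)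

theory Defs
  imports "HOL-Analysis.Analysis"
begin

definition int_lattice :: "(real ^ 'd) set" where
  "int_lattice = {n. \<forall>i. n $ i \<in> \<int>}"

definition Psi_hat :: "real \<Rightarrow> real \<Rightarrow> real ^ 'd \<Rightarrow> real \<Rightarrow> real" where
  "Psi_hat a b n t =
     (if a > 0 then exp (- t * ((- b + sqrt (b\<^sup>2 + 16 * a * pi\<^sup>2 * (norm n)\<^sup>2)) / (2 * a)))
      else exp (- (t / b) * (2 * pi * norm n)\<^sup>2))"

definition Psi :: "real \<Rightarrow> real \<Rightarrow> real ^ 'd \<Rightarrow> real \<Rightarrow> complex" where
  "Psi a b x t = (\<Sum>\<^sub>\<infinity>n\<in>int_lattice.
      complex_of_real (Psi_hat a b n t) * exp (2 * pi * \<i> * complex_of_real (x \<bullet> n)))"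

text \<open>u(x,t) = integral over T^d (= unit cube) of Psi(x-y,t) u_0(y) dy.\<close>
definition sol :: "real \<Rightarrow> real \<Rightarrow> (real ^ 'd \<Rightarrow> real) \<Rightarrow> real ^ 'd \<Rightarrow> real \<Rightarrow> complex" where
  "sol a b u0 x t = integral (cbox 0 One) (\<lambda>y. Psi a b (x - y) t * complex_of_real (u0 y))"

end

theory Submission
  imports Defs
begin

text \<open>Write the Fourier multiplier as \<open>exp (- t * \<lambda> n)\<close>. On the lattice the exponent grows at
  least linearly, \<open>\<lambda> n \<ge> c * norm n\<close> for \<open>n \<noteq> 0\<close>, so the Fourier series of the kernel converges
  absolutely and uniformly, the kernel is continuous, and
  \<open>norm (\<Psi> z t - 1) \<le> exp (- (t - 1) * c) * (\<Sum>n\<noteq>0. exp (- \<lambda> n))\<close>, i.e. \<open>\<Psi>(\<cdot>, t) \<rightarrow> 1\<close>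
  uniformly.\<close>

definition decay_rate :: "real \<Rightarrow> real \<Rightarrow> real ^ 'd \<Rightarrow> real" where
  "decay_rate a b n = (if a > 0 then (- b + sqrt (b\<^sup>2 + 16 * a * pi\<^sup>2 * (norm n)\<^sup>2)) / (2 * a)
      else (2 * pi * norm n)\<^sup>2 / b)"

lemma Psi_hat_eq_exp_decay_rate: "Psi_hat a b n t = exp (- t * decay_rate a b n)"
  by (simp add: Psi_hat_def decay_rate_def)

lemma decay_rate_zero: "b \<ge> 0 \<Longrightarrow> decay_rate a b 0 = 0"
  by (simp add: decay_rate_def)

text \<open>This is the value of \<open>decay_rate a b n\<close> at \<open>norm n = 1\<close>.\<close>

definition decay_const :: "real \<Rightarrow> real \<Rightarrow> real" where
  "decay_const a b = (if a > 0 then 8 * pi\<^sup>2 / (b + sqrt (b\<^sup>2 + 16 * a * pi\<^sup>2)) else 4 * pi\<^sup>2 / b)"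

lemma decay_const_pos:
  assumes "a \<ge> 0" "b \<ge> 0" "(a, b) \<noteq> (0, 0)"
  shows "decay_const a b > 0"
proof (cases "a > 0")
  case True
  then have "sqrt (b\<^sup>2 + 16 * a * pi\<^sup>2) > 0" by (simp add: add_nonneg_pos)
  then show ?thesis using True assms by (simp add: decay_const_def add_nonneg_pos)
qed (use assms in \<open>auto simp: decay_const_def\<close>)

lemma sqrt_add_minus_eq_divide:
  fixes b k :: real
  assumes "b \<ge> 0" "k > 0"
  shows "sqrt (b\<^sup>2 + k) - b = k / (sqrt (b\<^sup>2 + k) + b)"
proof -
  have pos: "sqrt (b\<^sup>2 + k) + b > 0" using assms by (simp add: add_nonneg_pos add_pos_nonneg)
  have "(sqrt (b\<^sup>2 + k) - b) * (sqrt (b\<^sup>2 + k) + b) = (sqrt (b\<^sup>2 + k))\<^sup>2 - b\<^sup>2"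
    by (simp add: algebra_simps power2_eq_square)
  also have "\<dots> = k" using assms by simp
  finally show ?thesis using pos by (simp add: eq_divide_eq)
qed

lemma decay_rate_ge_linear:
  assumes "a \<ge> 0" "b \<ge> 0" "(a, b) \<noteq> (0, 0)" "norm n \<ge> 1"
  shows "decay_rate a b n \<ge> decay_const a b * norm n"
proof (cases "a > 0")
  case True
  \<comment> \<open>Rationalising, \<open>decay_rate a b n = 8 pi\<^sup>2 N\<^sup>2 / (s + b)\<close>, and \<open>s \<le> N * K\<close> because \<open>N \<ge> 1\<close>.\<close>
  define N where "N = norm n"
  define s where "s = sqrt (b\<^sup>2 + 16 * a * pi\<^sup>2 * N\<^sup>2)"
  define K where "K = sqrt (b\<^sup>2 + 16 * a * pi\<^sup>2)"
  have N: "N \<ge> 1" using assms(4) by (simp add: N_def)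
  have K: "K > 0" using True by (simp add: K_def add_nonneg_pos)
  have "b\<^sup>2 \<le> N\<^sup>2 * b\<^sup>2"
    using mult_right_mono[OF one_le_power[OF N, of 2], of "b\<^sup>2"] by simp
  then have "s \<le> sqrt ((N * K)\<^sup>2)"
    unfolding s_def K_def using True by (intro real_sqrt_le_mono) (simp add: power_mult_distrib algebra_simps)
  also have "\<dots> = N * K" using N K by simp
  finally have sb_le: "s + b \<le> N * (K + b)"
    using mult_right_mono[OF N assms(2)] by (simp add: algebra_simps)
  have sb_pos: "s + b > 0"
    using True N assms(2) by (simp add: s_def add_nonneg_pos add_pos_nonneg)
  have s_minus_b: "s - b = 16 * a * pi\<^sup>2 * N\<^sup>2 / (s + b)"
    unfolding s_def using True N assms(2) by (intro sqrt_add_minus_eq_divide) auto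
  have "decay_const a b * N = 8 * pi\<^sup>2 * N\<^sup>2 / (N * (K + b))"
    using True N by (simp add: decay_const_def K_def power2_eq_square add.commute)
  also have "\<dots> \<le> 8 * pi\<^sup>2 * N\<^sup>2 / (s + b)"
    using sb_le sb_pos by (intro divide_left_mono) auto
  also have "\<dots> = (s - b) / (2 * a)"
    using s_minus_b sb_pos True by (simp add: field_simps)
  also have "\<dots> = decay_rate a b n"
    using True by (simp add: decay_rate_def s_def N_def)
  finally show ?thesis by (simp add: N_def)
next
  case False
  then have "b > 0" using assms by auto
  have "norm n \<le> (norm n)\<^sup>2"
    using mult_left_mono[OF assms(4) norm_ge_zero[of n]] by (simp add: power2_eq_square)
  then show ?thesis
    using False \<open>b > 0\<close> by (simp add: decay_rate_def decay_const_def power_mult_distrib divide_right_mono)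
qed

lemma summable_on_int_exp_neg_abs:
  fixes c :: real
  assumes "c > 0"
  shows "(\<lambda>k::int. exp (- c * \<bar>of_int k\<bar>)) summable_on UNIV"
proof -
  have geom: "(\<lambda>n::nat. exp (- c * real n)) summable_on UNIV"
  proof (rule norm_summable_imp_summable_on)
    show "summable (\<lambda>n. norm (exp (- c * real n)))"
      using summable_geometric[of "exp (- c)"] assms
      by (simp add: exp_of_nat_mult[symmetric] mult.commute)
  qed
  have "(\<lambda>k::int. exp (- c * \<bar>of_int k\<bar>)) summable_on range int"
    using geom by (subst summable_on_reindex) (auto simp: o_def)
  moreover have "(\<lambda>k::int. exp (- c * \<bar>of_int k\<bar>)) summable_on range (\<lambda>n. - int n)"
    using geom by (subst summable_on_reindex) (auto simp: o_def inj_on_def)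
  ultimately have "(\<lambda>k::int. exp (- c * \<bar>of_int k\<bar>)) summable_on (range int \<union> range (\<lambda>n. - int n))"
    by (rule summable_on_union)
  also have "range int \<union> range (\<lambda>n. - int n) = UNIV"
    by (auto intro: int_cases2)
  finally show ?thesis .
qed

lemma int_lattice_eq_range: "int_lattice = range (\<lambda>p. \<chi> i. real_of_int (p i))"
proof -
  have "n \<in> range (\<lambda>p. \<chi> i. real_of_int (p i))" if "n \<in> int_lattice" for n
  proof -
    have "\<forall>i. \<exists>k. n $ i = real_of_int k" using that unfolding int_lattice_def by (auto elim: Ints_cases)
    then obtain p where "\<And>i. n $ i = real_of_int (p i)" by metis
    then show ?thesis by (auto simp: vec_eq_iff)
  qed
  then show ?thesis unfolding int_lattice_def by auto
qed

lemma summable_on_int_lattice_prod_exp_neg_abs: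
  fixes c :: real
  assumes "c > 0"
  shows "(\<lambda>n. \<Prod>i\<in>UNIV. exp (- c * \<bar>n $ i\<bar>)) summable_on (int_lattice :: (real ^ 'd) set)"
proof -
  have "(\<lambda>p. \<Prod>i\<in>UNIV. exp (- c * \<bar>real_of_int (p i)\<bar>)) summable_on PiE (UNIV :: 'd set) (\<lambda>_. UNIV)"
    using summable_on_int_exp_neg_abs[OF assms]
    by (subst summable_on_iff_abs_summable_on_real, subst abs_summable_equivalent,
        intro abs_summable_on_prod_PiE) (auto simp: abs_summable_equivalent[symmetric])
  then have "(\<lambda>p. \<Prod>i\<in>UNIV. exp (- c * \<bar>real_of_int (p i)\<bar>)) summable_on (UNIV :: ('d \<Rightarrow> int) set)"
    by simp
  moreover have "inj (\<lambda>p::'d \<Rightarrow> int. \<chi> i. real_of_int (p i))"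
    by (auto simp: inj_on_def vec_eq_iff fun_eq_iff)
  ultimately show ?thesis
    unfolding int_lattice_eq_range by (subst summable_on_reindex) (auto simp: o_def)
qed

lemma int_lattice_norm_ge_1:
  assumes "n \<in> int_lattice" "n \<noteq> 0"
  shows "norm n \<ge> 1"
proof -
  obtain i where i: "n $ i \<noteq> 0" using assms(2) by (metis vec_eq_iff zero_index)
  obtain k where k: "n $ i = of_int k" using assms(1) unfolding int_lattice_def by (auto elim: Ints_cases)
  have "k \<noteq> 0" using i k by auto
  then have "1 \<le> \<bar>n $ i\<bar>" using k by linarith
  also have "\<dots> \<le> norm n" by (rule component_le_norm_cart)
  finally show ?thesis .
qed

lemma summable_on_exp_neg_decay_rate:
  assumes "a \<ge> 0" "b \<ge> 0" "(a, b) \<noteq> (0, 0)" "t > 0"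
  shows "(\<lambda>n. exp (- t * decay_rate a b n)) summable_on (int_lattice :: (real ^ 'd) set)"
proof (rule summable_on_comparison_test)
  define c where "c = t * decay_const a b / CARD('d)"
  have "c > 0" using decay_const_pos[OF assms(1-3)] assms(4) by (simp add: c_def)
  then show "(\<lambda>n. \<Prod>i\<in>UNIV. exp (- c * \<bar>n $ i\<bar>)) summable_on (int_lattice :: (real ^ 'd) set)"
    by (rule summable_on_int_lattice_prod_exp_neg_abs)
  fix n :: "real ^ 'd"
  assume n: "n \<in> int_lattice"
  have "c * (\<Sum>i\<in>UNIV. \<bar>n $ i\<bar>) \<le> t * decay_rate a b n"
  proof (cases "n = 0")
    case True
    then show ?thesis using assms(2) by (simp add: decay_rate_zero)
  next
    case False
    have "(\<Sum>i\<in>UNIV. \<bar>n $ i\<bar>) \<le> CARD('d) * norm n"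
      using sum_bounded_above[of UNIV "\<lambda>i. \<bar>n $ i\<bar>" "norm n"] component_le_norm_cart by auto
    then have "c * (\<Sum>i\<in>UNIV. \<bar>n $ i\<bar>) \<le> c * (CARD('d) * norm n)"
      using \<open>c > 0\<close> by (intro mult_left_mono) auto
    also have "\<dots> = t * (decay_const a b * norm n)"
      by (simp add: c_def)
    also have "\<dots> \<le> t * decay_rate a b n"
      using decay_rate_ge_linear[OF assms(1-3) int_lattice_norm_ge_1[OF n False]] assms(4) by simp
    finally show ?thesis .
  qed
  then show "exp (- t * decay_rate a b n) \<le> (\<Prod>i\<in>UNIV. exp (- c * \<bar>n $ i\<bar>))"
    by (simp add: exp_sum[symmetric] sum_distrib_left[symmetric] sum_negf)
qed simp

definition Psi_term :: "real \<Rightarrow> real \<Rightarrow> real \<Rightarrow> real ^ 'd \<Rightarrow> real ^ 'd \<Rightarrow> complex" where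
  "Psi_term a b t z n = complex_of_real (Psi_hat a b n t) * exp (2 * pi * \<i> * complex_of_real (z \<bullet> n))"

lemma Psi_eq_infsum_Psi_term: "Psi a b z t = (\<Sum>\<^sub>\<infinity>n\<in>int_lattice. Psi_term a b t z n)"
  unfolding Psi_def Psi_term_def ..

lemma norm_Psi_term: "norm (Psi_term a b t z n) = exp (- t * decay_rate a b n)"
  by (simp add: Psi_term_def Psi_hat_eq_exp_decay_rate norm_mult)

lemma Psi_term_zero: "b \<ge> 0 \<Longrightarrow> Psi_term a b t z 0 = 1"
  by (simp add: Psi_term_def Psi_hat_eq_exp_decay_rate decay_rate_zero)

lemma continuous_on_Psi:
  assumes "a \<ge> 0" "b \<ge> 0" "(a, b) \<noteq> (0, 0)" "t > 0"
  shows "continuous_on UNIV (\<lambda>z::real ^ 'd. Psi a b z t)"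
proof (rule uniform_limit_theorem)
  show "uniform_limit UNIV (\<lambda>F z. \<Sum>n\<in>F. Psi_term a b t z n) (\<lambda>z. Psi a b z t)
          (finite_subsets_at_top int_lattice)"
    unfolding Psi_eq_infsum_Psi_term
    by (rule Weierstrass_m_test_general[OF _ summable_on_exp_neg_decay_rate[OF assms]])
       (simp add: norm_Psi_term)
  show "\<forall>\<^sub>F F in finite_subsets_at_top int_lattice. continuous_on UNIV (\<lambda>z. \<Sum>n\<in>F. Psi_term a b t z n)"
    unfolding Psi_term_def by (intro always_eventually allI continuous_intros)
qed (simp add: finite_subsets_at_top_neq_bot)

lemma norm_Psi_minus_one_le:
  fixes z :: "real ^ 'd"
  assumes "a \<ge> 0" "b \<ge> 0" "(a, b) \<noteq> (0, 0)" "t \<ge> 1"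
  shows "norm (Psi a b z t - 1)
           \<le> exp (- (t - 1) * decay_const a b) * (\<Sum>\<^sub>\<infinity>n\<in>int_lattice - {0 :: real ^ 'd}. exp (- decay_rate a b n))"
proof -
  let ?L = "int_lattice - {0 :: real ^ 'd}"
  have "(\<lambda>n. exp (- decay_rate a b n)) summable_on (int_lattice :: (real ^ 'd) set)"
    using summable_on_exp_neg_decay_rate[OF assms(1-3), of 1] by simp
  then have sum1: "(\<lambda>n. exp (- decay_rate a b n)) summable_on ?L"
    by (rule summable_on_subset) auto
  have sumt: "(\<lambda>n. exp (- t * decay_rate a b n)) summable_on ?L"
    using assms(4) by (intro summable_on_subset[OF summable_on_exp_neg_decay_rate[OF assms(1-3), of t]]) auto
  have psum: "Psi_term a b t z summable_on ?L"
    by (rule abs_summable_summable) (simp only: norm_Psi_term sumt)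
  have "insert 0 ?L = int_lattice" by (auto simp: int_lattice_def)
  then have "Psi a b z t = (\<Sum>\<^sub>\<infinity>n\<in>insert 0 ?L. Psi_term a b t z n)"
    by (simp only: Psi_eq_infsum_Psi_term)
  also have "\<dots> = Psi_term a b t z 0 + (\<Sum>\<^sub>\<infinity>n\<in>?L. Psi_term a b t z n)"
    using psum by (rule infsum_insert) simp
  finally have "norm (Psi a b z t - 1) = norm (\<Sum>\<^sub>\<infinity>n\<in>?L. Psi_term a b t z n)"
    using assms(2) by (simp add: Psi_term_zero)
  also have "\<dots> \<le> (\<Sum>\<^sub>\<infinity>n\<in>?L. norm (Psi_term a b t z n))"
    by (rule norm_infsum_bound) (simp only: norm_Psi_term sumt)
  also have "\<dots> = (\<Sum>\<^sub>\<infinity>n\<in>?L. exp (- t * decay_rate a b n))"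
    by (simp only: norm_Psi_term)
  also have "\<dots> \<le> (\<Sum>\<^sub>\<infinity>n\<in>?L. exp (- (t - 1) * decay_const a b) * exp (- decay_rate a b n))"
  proof (rule infsum_mono[OF sumt summable_on_cmult_right[OF sum1]])
    fix n assume n: "n \<in> ?L"
    have "decay_const a b \<le> decay_const a b * norm n"
      using decay_const_pos[OF assms(1-3)] int_lattice_norm_ge_1[of n] n by simp
    also have "\<dots> \<le> decay_rate a b n"
      using decay_rate_ge_linear[OF assms(1-3)] int_lattice_norm_ge_1[of n] n by simp
    finally have "(t - 1) * decay_const a b \<le> (t - 1) * decay_rate a b n"
      using assms(4) by (intro mult_left_mono) auto
    then show "exp (- t * decay_rate a b n) \<le> exp (- (t - 1) * decay_const a b) * exp (- decay_rate a b n)"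
      by (simp add: exp_add[symmetric] algebra_simps)
  qed
  also have "\<dots> = exp (- (t - 1) * decay_const a b) * (\<Sum>\<^sub>\<infinity>n\<in>?L. exp (- decay_rate a b n))"
    using sum1 by (rule infsum_cmult_right)
  finally show ?thesis .
qed

lemma uniform_limit_Psi_one:
  assumes "a \<ge> 0" "b \<ge> 0" "(a, b) \<noteq> (0, 0)"
  shows "uniform_limit UNIV (\<lambda>t z::real ^ 'd. Psi a b z t) (\<lambda>_. 1) at_top"
proof (rule uniform_limitI)
  fix e :: real
  assume "e > 0"
  define S where "S = (\<Sum>\<^sub>\<infinity>n\<in>int_lattice - {0 :: real ^ 'd}. exp (- decay_rate a b n))"
  have "filterlim (\<lambda>t::real. t - 1) at_top at_top"
    using filterlim_tendsto_add_at_top[OF tendsto_const[of "-1"] filterlim_ident] by simp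
  then have "filterlim (\<lambda>t. (t - 1) * decay_const a b) at_top at_top"
    using decay_const_pos[OF assms] by (intro filterlim_at_top_mult_tendsto_pos[OF tendsto_const]) auto
  then have "filterlim (\<lambda>t. - ((t - 1) * decay_const a b)) at_bot at_top"
    unfolding filterlim_uminus_at_top .
  then have "((\<lambda>t. exp (- ((t - 1) * decay_const a b)) * S) \<longlongrightarrow> 0) at_top"
    by (intro tendsto_mult_left_zero filterlim_compose[OF exp_at_bot])
  then have "\<forall>\<^sub>F t in at_top. exp (- ((t - 1) * decay_const a b)) * S < e"
    using \<open>e > 0\<close> by (rule order_tendstoD)
  then show "\<forall>\<^sub>F t in at_top. \<forall>z \<in> (UNIV :: (real ^ 'd) set). dist (Psi a b z t) 1 < e"
    using eventually_ge_at_top[of 1]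
  proof eventually_elim
    case (elim t)
    show ?case
    proof
      fix z :: "real ^ 'd"
      have "dist (Psi a b z t) 1 = norm (Psi a b z t - 1)"
        by (simp add: dist_norm)
      also have "\<dots> \<le> exp (- (t - 1) * decay_const a b) * S"
        unfolding S_def using elim(2) by (rule norm_Psi_minus_one_le[OF assms])
      also have "\<dots> < e"
        using elim(1) by (simp only: minus_mult_left)
      finally show "dist (Psi a b z t) 1 < e" .
    qed
  qed
qed

lemma integrable_on_kernel_times_bounded:
  fixes K :: "real ^ 'd \<Rightarrow> complex" and u :: "real ^ 'd \<Rightarrow> real"
  assumes "continuous_on UNIV K" "u \<in> borel_measurable lebesgue" "bounded (range u)"
  shows "(\<lambda>w. K (p - w) * complex_of_real (u w)) integrable_on cbox c d"
proof -
  have "continuous_on (cbox c d) (\<lambda>w. K (p - w))"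
    by (rule continuous_on_compose2[OF assms(1)]) (auto intro!: continuous_intros)
  then have K_int: "(\<lambda>w. K (p - w)) absolutely_integrable_on cbox c d"
    by (rule absolutely_integrable_continuous)
  have scaleR_bilinear: "bilinear (\<lambda>(r::real) (z::complex). r *\<^sub>R z)"
    using bilinear_conv_bounded_bilinear bounded_bilinear_scaleR by blast
  have u_meas: "u \<in> borel_measurable (lebesgue_on (cbox c d))"
    using assms(2) by (rule measurable_restrict_space1)
  have u_bounded: "bounded (u ` cbox c d)"
    using assms(3) by (rule bounded_subset) auto
  have "(\<lambda>w. u w *\<^sub>R K (p - w)) absolutely_integrable_on cbox c d"
    using absolutely_integrable_bounded_measurable_product[OF scaleR_bilinear u_meas _ u_bounded K_int]
    by simp
  then show ?thesis
    by (auto dest: set_lebesgue_integral_eq_integral(1) simp: scaleR_conv_of_real mult.commute)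
qed

lemma norm_integral_kernel_diff_le:
  fixes K :: "real ^ 'd \<Rightarrow> complex" and u :: "real ^ 'd \<Rightarrow> real"
  assumes "continuous_on UNIV K" "u \<in> borel_measurable lebesgue"
    and u_le: "\<And>w. \<bar>u w\<bar> \<le> M" and K_near_1: "\<And>z. norm (K z - 1) \<le> \<delta>"
  shows "norm (integral (cbox c d) (\<lambda>w. K (x - w) * complex_of_real (u w))
               - integral (cbox c d) (\<lambda>w. K (y - w) * complex_of_real (u w)))
           \<le> 2 * M * \<delta> * measure lborel (cbox c d)"
proof -
  have "bounded (range u)"
    using u_le by (auto simp: bounded_iff)
  note int = integrable_on_kernel_times_bounded[OF assms(1,2) this]
  have "0 \<le> M" using u_le[of 0] abs_ge_zero order_trans by blast
  have "0 \<le> \<delta>" using K_near_1[of 0] norm_ge_zero order_trans by blast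
  have "integral (cbox c d) (\<lambda>w. K (x - w) * complex_of_real (u w))
          - integral (cbox c d) (\<lambda>w. K (y - w) * complex_of_real (u w))
        = integral (cbox c d) (\<lambda>w. K (x - w) * complex_of_real (u w) - K (y - w) * complex_of_real (u w))"
    by (rule integral_diff[symmetric, OF int int])
  also have "norm \<dots> \<le> 2 * M * \<delta> * measure lborel (cbox c d)"
  proof (rule has_integral_bound)
    show "0 \<le> 2 * M * \<delta>" using \<open>0 \<le> M\<close> \<open>0 \<le> \<delta>\<close> by simp
    show "((\<lambda>w. K (x - w) * complex_of_real (u w) - K (y - w) * complex_of_real (u w)) has_integral
            integral (cbox c d) (\<lambda>w. K (x - w) * complex_of_real (u w) - K (y - w) * complex_of_real (u w)))
            (cbox c d)"
      using integrable_diff[OF int int] by (rule integrable_integral)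
    fix w
    have "norm ((K (x - w) - 1) - (K (y - w) - 1)) \<le> 2 * \<delta>"
      using norm_triangle_ineq4[of "K (x - w) - 1" "K (y - w) - 1"] K_near_1[of "x - w"] K_near_1[of "y - w"]
      by linarith
    then have "norm ((K (x - w) - 1) - (K (y - w) - 1)) * \<bar>u w\<bar> \<le> 2 * \<delta> * M"
      using u_le[of w] \<open>0 \<le> \<delta>\<close> by (intro mult_mono) auto
    then show "norm (K (x - w) * complex_of_real (u w) - K (y - w) * complex_of_real (u w)) \<le> 2 * M * \<delta>"
      by (simp add: norm_mult right_diff_distrib[symmetric] mult_ac)
  qed
  finally show ?thesis .
qed

theorem lemma12:
  fixes a b :: real and u0 :: "real ^ 'd \<Rightarrow> real"
  assumes "a \<ge> 0" and "b \<ge> 0" and "(a, b) \<noteq> (0, 0)"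
    and "\<And>x n. n \<in> int_lattice \<Longrightarrow> u0 (x + n) = u0 x"
    and "\<And>x. u0 x \<ge> 0"
    and "bounded (range u0)"
    and "u0 \<in> borel_measurable lebesgue"
  shows "\<forall>r>0. \<forall>\<epsilon>>0. \<exists>T. \<forall>x\<in>ball 0 r. \<forall>y\<in>ball 0 r. \<forall>t>T.
           cmod (sol a b u0 x t - sol a b u0 y t) < \<epsilon>"
proof (intro allI impI)
  fix r \<epsilon> :: real
  assume "\<epsilon> > 0"
  obtain M where "M > 0" and M: "\<And>x. \<bar>u0 x\<bar> \<le> M"
    using assms(6) by (auto simp: bounded_pos)
  define \<delta> where "\<delta> = \<epsilon> / (2 * M + 1)"
  have "\<delta> > 0" using \<open>\<epsilon> > 0\<close> \<open>M > 0\<close> by (simp add: \<delta>_def)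
  have "\<forall>\<^sub>F t in at_top. t > 0 \<and> (\<forall>z :: real ^ 'd. norm (Psi a b z t - 1) < \<delta>)"
    using eventually_gt_at_top[of 0] uniform_limitD[OF uniform_limit_Psi_one[OF assms(1-3)] \<open>\<delta> > 0\<close>]
    by eventually_elim (simp add: dist_norm)
  then obtain T where T: "\<forall>t\<ge>T. t > 0 \<and> (\<forall>z :: real ^ 'd. norm (Psi a b z t - 1) < \<delta>)"
    unfolding eventually_at_top_linorder ..
  show "\<exists>T. \<forall>x\<in>ball 0 r. \<forall>y\<in>ball 0 r. \<forall>t>T. cmod (sol a b u0 x t - sol a b u0 y t) < \<epsilon>"
  proof (intro exI[of _ T] ballI allI impI)
    fix x y :: "real ^ 'd" and t :: real
    assume "t > T"
    have "t > 0" and "\<forall>z :: real ^ 'd. norm (Psi a b z t - 1) < \<delta>"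
      using T \<open>t > T\<close> by simp_all
    then have Psi_near_1: "norm (Psi a b z t - 1) \<le> \<delta>" for z :: "real ^ 'd"
      by (simp add: less_imp_le)
    have "cmod (sol a b u0 x t - sol a b u0 y t) \<le> 2 * M * \<delta> * measure lborel (cbox (0 :: real ^ 'd) One)"
      unfolding sol_def using Psi_near_1
      by (rule norm_integral_kernel_diff_le[OF continuous_on_Psi[OF assms(1-3) \<open>t > 0\<close>] assms(7) M])
    also have "\<dots> < \<epsilon>"
      using \<open>\<epsilon> > 0\<close> \<open>M > 0\<close> by (simp add: \<delta>_def field_simps)
    finally show "cmod (sol a b u0 x t - sol a b u0 y t) < \<epsilon>" .
  qed
qed

end
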